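(* Let $r>0$ and let $\mu:[0,\infty)\to\mathbb R$ and $\sigma:[0,\infty)\to(0,\infty)$ be globally Lipschitz continuous. Let $\psi\in C^2[0,\infty)$ be the non-negative increasing solution of $\frac{\sigma^2(x)}{2}f''(x)+\mu(x)f'(x)=rf(x)$ with $\psi(0)=0$, $\psi'(0)=1$. Fix $b\ge0$. If $x\mapsto\mu(x)-rx$ is non-decreasing on $[0,b)$ and $\mu(0)\ge0$, then $\psi$ is concave on $[0,b)$. *)

theory Defs
  imports "HOL-Analysis.Analysis"
begin

end

theory Submission
  imports Defs
begin

text \<open>
  Write \<open>h = \<mu> \<psi>' - r \<psi>\<close> for the first-order part of the equation, so that
  \<open>\<sigma>\<^sup>2/2 \<psi>'' = -h\<close> and \<open>\<psi>''\<close> has the sign of \<open>-h\<close>; note \<open>h(0) = \<mu>(0) \<ge> 0\<close>.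
  If \<open>\<psi>''(x) > 0\<close> for some \<open>x < b\<close>, let \<open>a\<close> be the last point of \<open>[0, x]\<close> with
  \<open>h(a) \<ge> 0\<close>. Then \<open>\<psi>\<close> is convex on \<open>[a, x]\<close>, so \<open>\<psi>'(a) \<le> \<psi>'(x)\<close> and
  \<open>\<psi>(x) - \<psi>(a) \<le> \<psi>'(x) (x - a)\<close>. Since \<open>\<mu>(x) \<ge> \<mu>(a) + r (x - a)\<close> and \<open>\<mu>(a) \<ge> 0\<close>
  (because \<open>\<mu>(a) \<psi>'(a) \<ge> r \<psi>(a) > 0\<close> when \<open>a > 0\<close>), this yields \<open>h(x) \<ge> h(a) \<ge> 0\<close>,
  contradicting \<open>h(x) < 0\<close>.
\<close>

lemma MVT_within:
  fixes f f' :: "real \<Rightarrow> real"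
  assumes "x < y" "{x..y} \<subseteq> C"
    and "\<And>z. z \<in> C \<Longrightarrow> (f has_real_derivative f' z) (at z within C)"
  obtains \<xi> where "x < \<xi>" "\<xi> < y" "f y - f x = f' \<xi> * (y - x)"
proof -
  have "\<exists>\<xi>\<in>{x<..<y}. f y - f x = (\<lambda>\<xi> h. f' \<xi> * h) \<xi> (y - x)"
  proof (rule mvt_simple[OF \<open>x < y\<close>])
    fix z assume "x \<le> z" "z \<le> y"
    with assms(2) have "z \<in> C"
      by auto
    from this assms(2) show "(f has_derivative (\<lambda>h. f' z * h)) (at z within {x..y})"
      unfolding has_field_derivative_def[symmetric] by (rule has_field_derivative_subset[OF assms(3)])
  qed
  with that show ?thesis
    by auto
qed

lemma deriv_nonneg_imp_mono_on_within:
  fixes f f' :: "real \<Rightarrow> real"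
  assumes "convex C"
    and deriv: "\<And>x. x \<in> C \<Longrightarrow> (f has_real_derivative f' x) (at x within C)"
    and nonneg: "\<And>x. x \<in> interior C \<Longrightarrow> f' x \<ge> 0"
  shows "mono_on C f"
proof (rule mono_onI)
  fix x y assume "x \<in> C" "y \<in> C" "x \<le> y"
  show "f x \<le> f y"
  proof (cases "x = y")
    case False
    with \<open>x \<le> y\<close> have "x < y"
      by simp
    with \<open>convex C\<close> \<open>x \<in> C\<close> \<open>y \<in> C\<close> have Icc: "{x..y} \<subseteq> C"
      by (rule atMostAtLeast_subset_convex)
    then obtain \<xi> where \<xi>: "x < \<xi>" "\<xi> < y" "f y - f x = f' \<xi> * (y - x)"
      using MVT_within[OF \<open>x < y\<close> Icc deriv] by blast
    from interior_mono[OF Icc] \<xi>(1,2) have "\<xi> \<in> interior C"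
      by auto
    with nonneg \<open>x < y\<close> have "f' \<xi> * (y - x) \<ge> 0"
      by simp
    with \<xi>(3) show ?thesis
      by simp
  qed simp
qed

lemma f''_ge0_imp_convex_within:
  fixes f f' f'' :: "real \<Rightarrow> real"
  assumes "convex C"
    and d1: "\<And>x. x \<in> C \<Longrightarrow> (f has_real_derivative f' x) (at x within C)"
    and d2: "\<And>x. x \<in> C \<Longrightarrow> (f' has_real_derivative f'' x) (at x within C)"
    and nonneg: "\<And>x. x \<in> interior C \<Longrightarrow> f'' x \<ge> 0"
  shows "convex_on C f"
proof (rule pos_convex_function[OF \<open>convex C\<close>])
  have mono: "mono_on C f'"
    using \<open>convex C\<close> d2 nonneg by (rule deriv_nonneg_imp_mono_on_within)
  have tangent: "f' x * (y - x) \<le> f y - f x" if "x \<in> C" "y \<in> C" "x < y" for x y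
  proof -
    from \<open>convex C\<close> that have Icc: "{x..y} \<subseteq> C"
      by (rule atMostAtLeast_subset_convex)
    then obtain \<xi> where \<xi>: "x < \<xi>" "\<xi> < y" "f y - f x = f' \<xi> * (y - x)"
      using MVT_within[OF \<open>x < y\<close> Icc d1] by blast
    from Icc \<xi> that have "f' x \<le> f' \<xi>"
      by (intro mono_onD[OF mono]) auto
    with \<open>x < y\<close> have "f' x * (y - x) \<le> f' \<xi> * (y - x)"
      by (intro mult_right_mono) auto
    with \<xi>(3) show ?thesis
      by simp
  qed
  have backward: "f' x * (y - x) \<le> f y - f x" if "x \<in> C" "y \<in> C" "y < x" for x y
  proof -
    from \<open>convex C\<close> that have Icc: "{y..x} \<subseteq> C"
      by (intro atMostAtLeast_subset_convex)
    then obtain \<xi> where \<xi>: "y < \<xi>" "\<xi> < x" "f x - f y = f' \<xi> * (x - y)"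
      using MVT_within[OF \<open>y < x\<close> Icc d1] by blast
    from Icc \<xi> that have "f' \<xi> \<le> f' x"
      by (intro mono_onD[OF mono]) auto
    with \<open>y < x\<close> have "f' \<xi> * (x - y) \<le> f' x * (x - y)"
      by (intro mult_right_mono) auto
    moreover have "f' x * (y - x) = - (f' x * (x - y))"
      by (simp add: algebra_simps)
    ultimately show ?thesis
      using \<xi>(3) by linarith
  qed
  show "f' x * (y - x) \<le> f y - f x" if "x \<in> C" "y \<in> C" for x y
  proof (cases x y rule: linorder_cases)
    case less
    with that show ?thesis
      by (rule tangent)
  next
    case greater
    with that show ?thesis
      by (rule backward)
  qed simp
qed

lemma f''_le0_imp_concave_within:
  fixes f f' f'' :: "real \<Rightarrow> real"
  assumes "convex C"
    and "\<And>x. x \<in> C \<Longrightarrow> (f has_real_derivative f' x) (at x within C)"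
    and "\<And>x. x \<in> C \<Longrightarrow> (f' has_real_derivative f'' x) (at x within C)"
    and "\<And>x. x \<in> interior C \<Longrightarrow> f'' x \<le> 0"
  shows "concave_on C f"
  unfolding concave_on_def
proof (rule f''_ge0_imp_convex_within[where f' = "\<lambda>x. - f' x" and f'' = "\<lambda>x. - f'' x"])
  show "((\<lambda>x. - f x) has_real_derivative - f' x) (at x within C)"
    and "((\<lambda>x. - f' x) has_real_derivative - f'' x) (at x within C)" if "x \<in> C" for x
    using assms(2,3)[OF that] by (auto intro: DERIV_minus)
qed (use assms(1,4) in auto)

lemma mono_on_imp_deriv_nonneg_within:
  fixes f :: "real \<Rightarrow> real"
  assumes mono: "mono_on {a..} f"
    and deriv: "(f has_real_derivative D) (at x within {a..})" and "a < x"
  shows "D \<ge> 0"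
proof -
  from \<open>a < x\<close> have "x \<in> interior {a..}"
    by simp
  moreover from this have "(f has_real_derivative D) (at x)"
    using deriv at_within_interior[of x "{a..}"] by simp
  ultimately show ?thesis
    by (rule mono_on_imp_deriv_nonneg[OF mono, rotated])
qed

lemma mono_on_gt_if_deriv_pos:
  fixes f :: "real \<Rightarrow> real"
  assumes mono: "mono_on {a..} f"
    and deriv: "(f has_real_derivative D) (at a within {a..})" and "D > 0"
    and "a < x"
  shows "f a < f x"
proof -
  obtain d where "d > 0" and inc: "\<And>h. h > 0 \<Longrightarrow> h < d \<Longrightarrow> f a < f (a + h)"
    using has_real_derivative_pos_inc_right[OF deriv \<open>D > 0\<close>] by auto
  define h where "h = min (x - a) (d / 2)"
  have "h > 0" "h < d" "a + h \<le> x"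
    using \<open>d > 0\<close> \<open>a < x\<close> by (auto simp: h_def)
  then have "f a < f (a + h)" and "f (a + h) \<le> f x"
    by (auto intro: inc mono_onD[OF mono])
  then show ?thesis
    by simp
qed

lemma last_nonneg_point:
  fixes h :: "real \<Rightarrow> real"
  assumes "u \<le> v" "continuous_on {u..v} h" "h u \<ge> 0" "h v < 0"
  obtains a where "u \<le> a" "a < v" "h a \<ge> 0" "\<And>y. a < y \<Longrightarrow> y \<le> v \<Longrightarrow> h y < 0"
proof -
  define S where "S = {u..v} \<inter> h -` {0..}"
  have "closed S"
    unfolding S_def using assms(2) by (rule continuous_closed_preimage) auto
  moreover have "u \<in> S" "bdd_above S"
    using assms(1,3) by (auto simp: S_def)
  ultimately have "Sup S \<in> S"
    using closed_contains_Sup by blast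
  then have lo: "u \<le> Sup S" and nonneg: "h (Sup S) \<ge> 0" and "Sup S \<le> v"
    by (auto simp: S_def)
  with assms(4) have "Sup S < v"
    by (cases "Sup S = v") auto
  have after: "h y < 0" if "Sup S < y" "y \<le> v" for y
  proof (rule ccontr)
    assume "\<not> h y < 0"
    with that lo have "y \<in> S"
      by (auto simp: S_def)
    with \<open>bdd_above S\<close> \<open>Sup S < y\<close> show False
      using cSup_upper by fastforce
  qed
  show ?thesis
    by (rule that[OF lo \<open>Sup S < v\<close> nonneg after])
qed

lemma first_order_part_le_on_convex_interval:
  fixes r a x :: real and \<mu> \<psi> \<psi>' :: "real \<Rightarrow> real"
  assumes "a < x" "r \<ge> 0"
    and deriv: "\<And>y. y \<in> {a..x} \<Longrightarrow> (\<psi> has_real_derivative \<psi>' y) (at y within {a..x})"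
    and mono: "mono_on {a..x} \<psi>'"
    and "\<psi>' x \<ge> 0" "\<mu> a \<ge> 0"
    and drift: "\<mu> a - r * a \<le> \<mu> x - r * x"
  shows "\<mu> a * \<psi>' a - r * \<psi> a \<le> \<mu> x * \<psi>' x - r * \<psi> x"
proof -
  obtain \<xi> where \<xi>: "a < \<xi>" "\<xi> < x" "\<psi> x - \<psi> a = \<psi>' \<xi> * (x - a)"
    using MVT_within[OF \<open>a < x\<close> order_refl deriv] by blast
  have "\<psi>' \<xi> \<le> \<psi>' x"
    using \<xi> by (intro mono_onD[OF mono]) auto
  with \<open>a < x\<close> have "\<psi>' \<xi> * (x - a) \<le> \<psi>' x * (x - a)"
    by (intro mult_right_mono) auto
  with \<xi>(3) have tangent: "\<psi> x - \<psi> a \<le> \<psi>' x * (x - a)"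
    by simp
  have "\<psi>' a \<le> \<psi>' x"
    using \<open>a < x\<close> by (intro mono_onD[OF mono]) auto
  then have "\<mu> a * \<psi>' a - r * \<psi> a \<le> \<mu> a * \<psi>' x - r * \<psi> a"
    using \<open>\<mu> a \<ge> 0\<close> by (intro diff_right_mono mult_left_mono)
  also have "\<dots> \<le> (\<mu> a + r * (x - a)) * \<psi>' x - r * \<psi> x"
    using mult_left_mono[OF tangent \<open>r \<ge> 0\<close>] by (simp add: algebra_simps)
  also have "\<dots> \<le> \<mu> x * \<psi>' x - r * \<psi> x"
  proof -
    from drift have "\<mu> a + r * (x - a) \<le> \<mu> x"
      by (simp add: algebra_simps)
    with \<open>\<psi>' x \<ge> 0\<close> show ?thesis
      by (intro diff_right_mono mult_right_mono)
  qed
  finally show ?thesis .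
qed

lemma drift_nonneg_if_first_order_part_nonneg:
  fixes r a :: real and \<mu> \<psi> \<psi>' :: "real \<Rightarrow> real"
  assumes "r > 0"
    and d1: "\<And>y. y \<ge> 0 \<Longrightarrow> (\<psi> has_real_derivative \<psi>' y) (at y within {0..})"
    and psi_incr: "mono_on {0..} \<psi>"
    and "\<psi> 0 = 0" "\<psi>' 0 = 1" "\<mu> 0 \<ge> 0"
    and "a \<ge> 0" and first_order_part: "\<mu> a * \<psi>' a - r * \<psi> a \<ge> 0"
  shows "\<mu> a \<ge> 0"
proof (cases "a = 0")
  case False
  with \<open>a \<ge> 0\<close> have "a > 0"
    by simp
  with assms(4,5) have "0 < \<psi> a"
    using mono_on_gt_if_deriv_pos[OF psi_incr d1[of 0]] by simp
  with \<open>r > 0\<close> have "r * \<psi> a > 0"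
    by simp
  with first_order_part have "\<mu> a * \<psi>' a > 0"
    by simp
  moreover have "\<psi>' a \<ge> 0"
    using mono_on_imp_deriv_nonneg_within[OF psi_incr d1 \<open>a > 0\<close>] \<open>a > 0\<close> by simp
  ultimately show ?thesis
    by (simp add: zero_less_mult_iff)
qed (use assms(6) in simp)

lemma ode_second_derivative_pos_iff:
  fixes s m r p p' p'' :: real
  assumes "s > 0" and "s\<^sup>2 / 2 * p'' + m * p' = r * p"
  shows "p'' > 0 \<longleftrightarrow> m * p' - r * p < 0"
proof -
  from \<open>s > 0\<close> have "p'' > 0 \<longleftrightarrow> s\<^sup>2 / 2 * p'' > 0"
    by (simp add: zero_less_mult_iff)
  also have "s\<^sup>2 / 2 * p'' = - (m * p' - r * p)"
    using assms(2) by (simp add: algebra_simps)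
  finally show ?thesis
    by simp
qed

lemma ode_second_derivative_nonpos:
  fixes r b x :: real and \<mu> \<sigma> \<psi> \<psi>' \<psi>'' :: "real \<Rightarrow> real"
  assumes r_pos: "r > 0"
    and mu_cont: "continuous_on {0..} \<mu>"
    and sigma_pos: "\<And>y. y \<ge> 0 \<Longrightarrow> \<sigma> y > 0"
    and d1: "\<And>y. y \<ge> 0 \<Longrightarrow> (\<psi> has_real_derivative \<psi>' y) (at y within {0..})"
    and d2: "\<And>y. y \<ge> 0 \<Longrightarrow> (\<psi>' has_real_derivative \<psi>'' y) (at y within {0..})"
    and ode: "\<And>y. y \<ge> 0 \<Longrightarrow> (\<sigma> y)\<^sup>2 / 2 * \<psi>'' y + \<mu> y * \<psi>' y = r * \<psi> y"
    and psi_incr: "mono_on {0..} \<psi>"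
    and psi0: "\<psi> 0 = 0"
    and dpsi0: "\<psi>' 0 = 1"
    and drift_mono: "mono_on {0..<b} (\<lambda>y. \<mu> y - r * y)"
    and mu0: "\<mu> 0 \<ge> 0"
    and x: "x \<in> {0..<b}"
  shows "\<psi>'' x \<le> 0"
proof (rule ccontr)
  define h where "h y = \<mu> y * \<psi>' y - r * \<psi> y" for y
  have psi''_pos_iff: "\<psi>'' y > 0 \<longleftrightarrow> h y < 0" if "y \<ge> 0" for y
    unfolding h_def using sigma_pos[OF that] ode[OF that] by (rule ode_second_derivative_pos_iff)
  have "continuous_on {0..} h"
    unfolding h_def
    using DERIV_continuous_on[of "{0..}" \<psi>] DERIV_continuous_on[of "{0..}" \<psi>'] d1 d2
    by (intro continuous_intros mu_cont) auto
  assume "\<not> \<psi>'' x \<le> 0"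
  with x psi''_pos_iff[of x] have "h x < 0"
    by auto
  moreover have "h 0 \<ge> 0"
    using mu0 by (simp add: h_def psi0 dpsi0)
  moreover from \<open>continuous_on {0..} h\<close> have "continuous_on {0..x} h"
    by (rule continuous_on_subset) auto
  ultimately obtain a where a: "0 \<le> a" "a < x" "h a \<ge> 0"
    and after: "\<And>y. a < y \<Longrightarrow> y \<le> x \<Longrightarrow> h y < 0"
    using last_nonneg_point[of 0 x h] x by auto
  have mono: "mono_on {a..x} \<psi>'"
  proof (rule deriv_nonneg_imp_mono_on_within)
    show "(\<psi>' has_real_derivative \<psi>'' y) (at y within {a..x})" if "y \<in> {a..x}" for y
      using that a(1) by (intro has_field_derivative_subset[OF d2]) auto
    show "\<psi>'' y \<ge> 0" if "y \<in> interior {a..x}" for y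
      using that psi''_pos_iff[of y] after[of y] a(1) by auto
  qed simp
  have mu_a: "\<mu> a \<ge> 0"
    using drift_nonneg_if_first_order_part_nonneg[where \<mu> = \<mu>, OF r_pos d1 psi_incr psi0 dpsi0 mu0]
      a(1) \<open>h a \<ge> 0\<close>
    by (simp add: h_def)
  have drift: "\<mu> a - r * a \<le> \<mu> x - r * x"
    using a x by (intro mono_onD[OF drift_mono]) auto
  have deriv: "(\<psi> has_real_derivative \<psi>' y) (at y within {a..x})" if "y \<in> {a..x}" for y
    using that a(1) by (intro has_field_derivative_subset[OF d1]) auto
  have "h a \<le> h x"
  proof -
    have "\<psi>' x \<ge> 0"
      using mono_on_imp_deriv_nonneg_within[OF psi_incr d1] a(1,2) by simp
    with r_pos show ?thesis
      unfolding h_def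
      by (intro first_order_part_le_on_convex_interval[OF \<open>a < x\<close> _ deriv mono _ mu_a drift]) auto
  qed
  with \<open>h a \<ge> 0\<close> \<open>h x < 0\<close> show False
    by simp
qed

theorem lemmaA3:
  fixes r b :: real and \<mu> \<sigma> \<psi> \<psi>' \<psi>'' :: "real \<Rightarrow> real"
  assumes r_pos: "r > 0"
    and mu_lip: "\<exists>L. L-lipschitz_on {0..} \<mu>"
    and sigma_lip: "\<exists>L. L-lipschitz_on {0..} \<sigma>"
    and sigma_pos: "\<And>x. x \<ge> 0 \<Longrightarrow> \<sigma> x > 0"
    and d1: "\<And>x. x \<ge> 0 \<Longrightarrow> (\<psi> has_real_derivative \<psi>' x) (at x within {0..})"
    and d2: "\<And>x. x \<ge> 0 \<Longrightarrow> (\<psi>' has_real_derivative \<psi>'' x) (at x within {0..})"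
    and d2_cont: "continuous_on {0..} \<psi>''"
    and ode: "\<And>x. x \<ge> 0 \<Longrightarrow> (\<sigma> x)\<^sup>2 / 2 * \<psi>'' x + \<mu> x * \<psi>' x = r * \<psi> x"
    and psi_nonneg: "\<And>x. x \<ge> 0 \<Longrightarrow> \<psi> x \<ge> 0"
    and psi_incr: "mono_on {0..} \<psi>"
    and psi0: "\<psi> 0 = 0"
    and dpsi0: "\<psi>' 0 = 1"
    and b_nonneg: "b \<ge> 0"
    and drift_mono: "mono_on {0..<b} (\<lambda>x. \<mu> x - r * x)"
    and mu0: "\<mu> 0 \<ge> 0"
  shows "concave_on {0..<b} \<psi>"
proof (rule f''_le0_imp_concave_within)
  from mu_lip obtain L where "L-lipschitz_on {0..} \<mu>"
    by blast
  then have mu_cont: "continuous_on {0..} \<mu>"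
    by (rule lipschitz_on_continuous_on)
  show "\<psi>'' x \<le> 0" if "x \<in> interior {0..<b}" for x
    using that interior_subset
    by (intro ode_second_derivative_nonpos[OF r_pos mu_cont sigma_pos d1 d2 ode psi_incr psi0 dpsi0
        drift_mono mu0]) auto
  show "(\<psi> has_real_derivative \<psi>' x) (at x within {0..<b})"
    and "(\<psi>' has_real_derivative \<psi>'' x) (at x within {0..<b})" if "x \<in> {0..<b}" for x
    using that by (auto intro: has_field_derivative_subset[OF d1] has_field_derivative_subset[OF d2])
qed simp

end
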